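(* For each $N\ge1$ let $\eta^N(t)$ be an irreducible continuous-time Markov chain on a finite set $\Omega_N$ with jump rates $R_N(\eta,\xi)$ and unique stationary distribution $\nu_N$; let $A_N\subset\Omega_N$ with $\lim_N\nu_N(A_N)=0$ and $H_N=\inf\{t>0:\eta^N(t)\in A_N\}$. Let $S_N$ be a positive sequence, $\mu_N$ probability measures on $\Omega_N$, and $R'_N(\eta,A_N)=\mathbf 1\{\eta\in A_N^c\}R_N(\eta,A_N)$. Assume that for some sequence $\gamma_N>0$ with $\gamma_N^{-1}\gg S_N$, $$\lim_{N\to\infty}\Big\{\mu_N(A_N)+E_{\nu_N}[R'_N(\cdot,A_N)]\sum_{\eta\in\Omega_N}\mu_N(\eta)\frac1{\mathrm{Cap}_\star(\eta,\Omega^\star_N)}\Big\}=0.$$ Then $\lim_{N\to\infty}\mathbb P_{\mu_N}[H_N<S_N]=0$.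
   Context: $R_N(\eta,A_N)=\sum_{\zeta\in A_N}R_N(\eta,\zeta)$; $E_{\nu_N}$ is expectation with respect to $\nu_N$. $a_N\gg b_N$ means $b_N/a_N\to0$. Enlarged process associated to $\gamma_N$: let $\Omega^\star_N=\{\eta^\star:\eta\in\Omega_N\}$ be a disjoint copy of $\Omega_N$; the enlarged process is the Markov chain on $\Omega_N\cup\Omega^\star_N$ which from $\eta\in\Omega_N$ jumps to $\xi\in\Omega_N$ at rate $R_N(\eta,\xi)$ and to $\eta^\star$ at rate $\gamma_N$, and from $\eta^\star$ jumps to $\eta$ at rate $\gamma_N$ (no other jumps). Its stationary measure is $\nu^\star_N(\eta)=\nu^\star_N(\eta^\star)=\nu_N(\eta)/2$. With $\mathbb P^\star_\eta$ its law from $\eta$, $\lambda^\star(\eta)=\sum_\xi R_N(\eta,\xi)+\gamma_N$ its holding rate at $\eta$, $H_B=\inf\{s>0:\text{process}\in B\}$ and $H^+_\eta=\inf\{t>0:\text{process at }\eta\text{ at time }t\text{ and left }\eta\text{ before }t\}$, the capacity is $\mathrm{Cap}_\star(\eta,\Omega^\star_N)=\nu^\star_N(\eta)\lambda^\star(\eta)\mathbb P^\star_\eta[H_{\Omega^\star_N}<H^+_\eta]$. *)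

theory Defs
  imports "HOL-Probability.Probability"
begin

text \<open>Continuous-time Markov chain on a finite state set \<open>\<Omega>\<close> (carrier set inside type 'a),
  given by jump rates \<open>R x y\<close> (with \<open>R x x = 0\<close>). The process is realised by the standard
  jump-chain / holding-time construction: the embedded chain jumps from \<open>x\<close> to \<open>y\<close> with
  probability \<open>R x y / \<lambda>(x)\<close>, and it stays at the i-th visited state an exponential time of
  rate \<open>\<lambda>(x_i)\<close>, holding times independent given the embedded path.\<close>

definition rate_out :: "('a \<Rightarrow> 'a \<Rightarrow> real) \<Rightarrow> 'a set \<Rightarrow> 'a \<Rightarrow> real" where
  "rate_out R \<Omega> x = (\<Sum>y\<in>\<Omega>. R x y)"

definition jump_prob :: "('a \<Rightarrow> 'a \<Rightarrow> real) \<Rightarrow> 'a set \<Rightarrow> 'a \<Rightarrow> 'a \<Rightarrow> real" where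
  "jump_prob R \<Omega> x y = R x y / rate_out R \<Omega> x"

definition path_weight :: "('a \<Rightarrow> 'a \<Rightarrow> real) \<Rightarrow> 'a set \<Rightarrow> 'a list \<Rightarrow> real" where
  "path_weight R \<Omega> xs = (\<Prod>i<length xs - 1. jump_prob R \<Omega> (xs ! i) (xs ! Suc i))"

definition holding_law :: "('a \<Rightarrow> 'a \<Rightarrow> real) \<Rightarrow> 'a set \<Rightarrow> 'a list \<Rightarrow> (nat \<Rightarrow> real) measure" where
  "holding_law R \<Omega> xs =
     (\<Pi>\<^sub>M i\<in>{..<length xs - 1}. density lborel (exponential_density (rate_out R \<Omega> (xs ! i))))"

definition holding_sum_lt :: "('a \<Rightarrow> 'a \<Rightarrow> real) \<Rightarrow> 'a set \<Rightarrow> 'a list \<Rightarrow> real \<Rightarrow> real" where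
  "holding_sum_lt R \<Omega> xs t =
     measure (holding_law R \<Omega> xs)
       {E \<in> space (holding_law R \<Omega> xs). (\<Sum>i<length xs - 1. E i) < t}"

text \<open>Paths of the embedded chain from \<open>x\<close> which enter \<open>B\<close> for the first time at step \<open>n\<close>
  (for \<open>n = 0\<close>: \<open>x \<in> B\<close>, in which case \<open>H_B = 0\<close> by right continuity).\<close>
definition hit_paths :: "'a set \<Rightarrow> 'a set \<Rightarrow> 'a \<Rightarrow> nat \<Rightarrow> 'a list set" where
  "hit_paths \<Omega> B x n = {xs. length xs = Suc n \<and> set xs \<subseteq> \<Omega> \<and> xs ! 0 = x \<and>
                              (\<forall>i<n. xs ! i \<notin> B) \<and> xs ! n \<in> B}"

text \<open>\<open>P_x[H_B < t]\<close> with \<open>H_B = inf{s > 0. X(s) \<in> B}\<close>.\<close>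
definition prob_hit_before :: "('a \<Rightarrow> 'a \<Rightarrow> real) \<Rightarrow> 'a set \<Rightarrow> 'a set \<Rightarrow> 'a \<Rightarrow> real \<Rightarrow> real" where
  "prob_hit_before R \<Omega> B x t =
     (\<Sum>n. \<Sum>xs\<in>hit_paths \<Omega> B x n. path_weight R \<Omega> xs * holding_sum_lt R \<Omega> xs t)"

definition esc_paths :: "'a set \<Rightarrow> 'a set \<Rightarrow> 'a \<Rightarrow> nat \<Rightarrow> 'a list set" where
  "esc_paths \<Omega> B x n = {xs. length xs = Suc n \<and> set xs \<subseteq> \<Omega> \<and> xs ! 0 = x \<and>
                              (\<forall>i\<in>{1..<n}. xs ! i \<notin> B \<and> xs ! i \<noteq> x) \<and> xs ! n \<in> B}"

text \<open>\<open>P_x[H_B < H^+_x]\<close> (depends only on the embedded jump chain).\<close>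
definition escape_prob :: "('a \<Rightarrow> 'a \<Rightarrow> real) \<Rightarrow> 'a set \<Rightarrow> 'a set \<Rightarrow> 'a \<Rightarrow> real" where
  "escape_prob R \<Omega> B x = (\<Sum>n. \<Sum>xs\<in>esc_paths \<Omega> B x (Suc n). path_weight R \<Omega> xs)"

definition capacity :: "('a \<Rightarrow> 'a \<Rightarrow> real) \<Rightarrow> 'a set \<Rightarrow> ('a \<Rightarrow> real) \<Rightarrow> 'a set \<Rightarrow> 'a \<Rightarrow> real" where
  "capacity R \<Omega> \<pi> B x = \<pi> x * rate_out R \<Omega> x * escape_prob R \<Omega> B x"

text \<open>Enlarged process: \<open>Inl x\<close> is \<open>\<eta>\<close>, \<open>Inr x\<close> is the copy \<open>\<eta>\<^sup>\<star>\<close>.\<close>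
definition enl_space :: "'a set \<Rightarrow> ('a + 'a) set" where
  "enl_space \<Omega> = Inl ` \<Omega> \<union> Inr ` \<Omega>"

fun enl_rates :: "('a \<Rightarrow> 'a \<Rightarrow> real) \<Rightarrow> real \<Rightarrow> 'a + 'a \<Rightarrow> 'a + 'a \<Rightarrow> real" where
  "enl_rates R \<gamma> (Inl x) (Inl y) = R x y"
| "enl_rates R \<gamma> (Inl x) (Inr y) = (if x = y then \<gamma> else 0)"
| "enl_rates R \<gamma> (Inr x) (Inl y) = (if x = y then \<gamma> else 0)"
| "enl_rates R \<gamma> (Inr x) (Inr y) = 0"

fun enl_measure :: "('a \<Rightarrow> real) \<Rightarrow> 'a + 'a \<Rightarrow> real" where
  "enl_measure \<nu> (Inl x) = \<nu> x / 2"
| "enl_measure \<nu> (Inr x) = \<nu> x / 2"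

definition cap_star :: "('a \<Rightarrow> 'a \<Rightarrow> real) \<Rightarrow> 'a set \<Rightarrow> ('a \<Rightarrow> real) \<Rightarrow> real \<Rightarrow> 'a \<Rightarrow> real" where
  "cap_star R \<Omega> \<nu> \<gamma> \<eta> =
     capacity (enl_rates R \<gamma>) (enl_space \<Omega>) (enl_measure \<nu>) (Inr ` \<Omega>) (Inl \<eta>)"

definition irreducible_rates :: "('a \<Rightarrow> 'a \<Rightarrow> real) \<Rightarrow> 'a set \<Rightarrow> bool" where
  "irreducible_rates R \<Omega> \<longleftrightarrow>
     (\<forall>x\<in>\<Omega>. \<forall>y\<in>\<Omega>. (x, y) \<in> {(a, b). a \<in> \<Omega> \<and> b \<in> \<Omega> \<and> R a b > 0}\<^sup>*)"

definition stationary :: "('a \<Rightarrow> 'a \<Rightarrow> real) \<Rightarrow> 'a set \<Rightarrow> ('a \<Rightarrow> real) \<Rightarrow> bool" where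
  "stationary R \<Omega> \<nu> \<longleftrightarrow> (\<forall>x\<in>\<Omega>. \<nu> x \<ge> 0) \<and> (\<Sum>x\<in>\<Omega>. \<nu> x) = 1 \<and>
     (\<forall>y\<in>\<Omega>. (\<Sum>x\<in>\<Omega>. \<nu> x * R x y) = \<nu> y * rate_out R \<Omega> y)"

definition prob_on :: "'a set \<Rightarrow> ('a \<Rightarrow> real) \<Rightarrow> bool" where
  "prob_on \<Omega> \<mu> \<longleftrightarrow> (\<forall>x\<in>\<Omega>. \<mu> x \<ge> 0) \<and> (\<Sum>x\<in>\<Omega>. \<mu> x) = 1"

end

theory Submission
  imports Defs
begin

text \<open>
  Expand \<open>P\<^sub>\<eta>[H\<^sub>A < S]\<close> over the paths of the jump chain. A Chernoff bound for the total holding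
  time along a path \<open>x\<^sub>0 \<dots> x\<^sub>n\<close> gives \<open>P[holding time < S] \<le> exp(\<gamma>S) \<Prod>\<^sub>i \<lambda>(x\<^sub>i) / (\<lambda>(x\<^sub>i) + \<gamma>)\<close>,
  so the sum is at most \<open>exp(\<gamma>S)\<close> times the total weight of the hitting paths of the jump chain
  killed at rate \<open>\<gamma>\<close>. Cutting every such path at its last visit to \<open>\<eta>\<close> factors this weight into
  loops at \<open>\<eta>\<close> and a final exit into \<open>A\<close>. Returning to \<open>\<eta>\<close> and escaping to \<open>\<Omega>\<^sup>\<star>\<close> are disjoint
  events of the enlarged chain, so the loops weigh at most \<open>1 / P\<^sup>\<star>\<^sub>\<eta>[H(\<Omega>\<^sup>\<star>) < H\<^sup>+\<^sub>\<eta>]\<close>.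
  Reversed in time with respect to \<open>\<nu>\<close>, an exit becomes an entrance step into \<open>A\<close> drawn from \<open>\<nu>\<close>,
  so \<open>\<nu>(\<eta>) (\<lambda>(\<eta>) + \<gamma>)\<close> times the exits weigh at most \<open>E\<^sub>\<nu>[R'(\<cdot>, A)]\<close>. Since
  \<open>Cap\<^sub>\<star>(\<eta>, \<Omega>\<^sup>\<star>) = \<nu>(\<eta>) (\<lambda>(\<eta>) + \<gamma>) P\<^sup>\<star>\<^sub>\<eta>[H(\<Omega>\<^sup>\<star>) < H\<^sup>+\<^sub>\<eta>] / 2\<close>, averaging over \<open>\<mu>\<close> gives
  \<open>P\<^sub>\<mu>[H\<^sub>A < S] \<le> exp(\<gamma>S) (\<mu>(A) + E\<^sub>\<nu>[R'(\<cdot>, A)] \<Sum>\<^sub>\<eta> \<mu>(\<eta>) / Cap\<^sub>\<star>(\<eta>, \<Omega>\<^sup>\<star>))\<close>, and \<open>\<gamma>S \<rightarrow> 0\<close>.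
\<close>

section \<open>Weights of walks\<close>

fun walk_weight :: "('a \<Rightarrow> 'a \<Rightarrow> real) \<Rightarrow> 'a list \<Rightarrow> real" where
  "walk_weight p (x # y # ys) = p x y * walk_weight p (y # ys)"
| "walk_weight p _ = 1"

lemma walk_weight_eq_prod: "walk_weight p xs = (\<Prod>i<length xs - 1. p (xs ! i) (xs ! Suc i))"
  by (induction p xs rule: walk_weight.induct)
    (simp_all add: prod.lessThan_Suc_shift del: prod.lessThan_Suc)

lemma walk_weight_snoc: "xs \<noteq> [] \<Longrightarrow> walk_weight p (xs @ [y]) = walk_weight p xs * p (last xs) y"
  by (induction p xs rule: walk_weight.induct) auto

lemma walk_weight_append: "xs \<noteq> [] \<Longrightarrow>
    walk_weight p (xs @ y # ys) = walk_weight p (xs @ [y]) * walk_weight p (y # ys)"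
  by (induction p xs rule: walk_weight.induct) auto

lemma walk_weight_take_drop:
  assumes "k < length xs"
  shows "walk_weight p xs = walk_weight p (take (Suc k) xs) * walk_weight p (drop k xs)"
proof (cases k)
  case 0
  with assms show ?thesis by (cases xs) auto
next
  case (Suc k')
  with assms have "take k xs \<noteq> []" by auto
  from walk_weight_append[OF this, of p "xs ! k" "drop (Suc k) xs"] assms show ?thesis
    by (simp add: id_take_nth_drop[symmetric] take_Suc_conv_app_nth[symmetric] Cons_nth_drop_Suc)
qed

lemma walk_weight_nonneg:
  "(\<And>x y. x \<in> V \<Longrightarrow> y \<in> V \<Longrightarrow> 0 \<le> p x y) \<Longrightarrow> set xs \<subseteq> V \<Longrightarrow> 0 \<le> walk_weight p xs"
  by (induction p xs rule: walk_weight.induct) auto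

lemma walk_weight_cong:
  "(\<And>x y. x \<in> set xs \<Longrightarrow> y \<in> set xs \<Longrightarrow> p x y = p' x y) \<Longrightarrow> walk_weight p xs = walk_weight p' xs"
  by (induction p xs rule: walk_weight.induct) auto

lemma walk_weight_map: "walk_weight p (map h xs) = walk_weight (\<lambda>x y. p (h x) (h y)) xs"
  by (induction "\<lambda>x y. p (h x) (h y)" xs rule: walk_weight.induct) auto

lemma walk_weight_Cons: "xs \<noteq> [] \<Longrightarrow> walk_weight p (x # xs) = p x (hd xs) * walk_weight p xs"
  by (cases xs) auto

lemma walk_weight_rev:
  assumes rev: "\<And>x y. x \<in> V \<Longrightarrow> y \<in> V \<Longrightarrow> a x * p x y = a y * q y x"
    and "xs \<noteq> []" "set xs \<subseteq> V"
  shows "a (hd xs) * walk_weight p xs = a (last xs) * walk_weight q (rev xs)"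
  using assms(2,3)
proof (induction xs rule: list_nonempty_induct)
  case (cons x xs)
  have balance: "a x * p x (hd xs) = a (hd xs) * q (hd xs) x"
    using cons by (intro rev) auto
  have "a x * walk_weight p (x # xs) = a x * p x (hd xs) * walk_weight p xs"
    using cons(1) by (simp add: walk_weight_Cons)
  also have "\<dots> = (a (hd xs) * walk_weight p xs) * q (hd xs) x"
    by (simp add: balance mult_ac)
  also have "\<dots> = a (last (x # xs)) * walk_weight q (rev (x # xs))"
    using cons by (simp add: walk_weight_snoc last_rev)
  finally show ?case by simp
qed simp

lemma sum_walk_weight_Cons_prefix_free_le_1:
  assumes V: "finite V" and nonneg: "\<And>x y. x \<in> V \<Longrightarrow> y \<in> V \<Longrightarrow> 0 \<le> p x y"
    and sub: "\<And>x. x \<in> V \<Longrightarrow> (\<Sum>y\<in>V. p x y) \<le> 1"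
    and "x \<in> V" and "\<forall>ys\<in>P. set ys \<subseteq> V \<and> length ys \<le> M"
    and "\<forall>ys\<in>P. \<forall>zs. ys @ zs \<in> P \<longrightarrow> zs = []"
  shows "(\<Sum>ys\<in>P. walk_weight p (x # ys)) \<le> 1"
  using assms(4-)
proof (induction M arbitrary: x P)
  case 0
  then have "P \<subseteq> {[]}" by auto
  then have "P = {} \<or> P = {[]}" by (rule subset_singletonD)
  then show ?case by auto
next
  case (Suc M)
  show ?case
  proof (cases "[] \<in> P")
    case True
    have "ys = []" if "ys \<in> P" for ys
      using Suc.prems(3) True that by (metis append_Nil)
    with True have "P = {[]}" by blast
    then show ?thesis by simp
  next
    case False
    define Q where "Q y = {ys. y # ys \<in> P}" for y
    have P: "P = (\<lambda>(y, ys). y # ys) ` Sigma V Q"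
    proof (intro set_eqI iffI)
      fix xs assume "xs \<in> P"
      with False Suc.prems(2) show "xs \<in> (\<lambda>(y, ys). y # ys) ` Sigma V Q"
        by (cases xs) (auto simp: Q_def image_iff)
    qed (auto simp: Q_def)
    have fin: "finite (Q y)" for y
      by (rule finite_subset[OF _ finite_lists_length_le[OF V, of M]])
        (use Suc.prems(2) in \<open>fastforce simp: Q_def\<close>)
    have "(\<Sum>ys\<in>P. walk_weight p (x # ys)) = (\<Sum>y\<in>V. p x y * (\<Sum>ys\<in>Q y. walk_weight p (y # ys)))"
      unfolding P using V fin
      by (subst sum.reindex)
        (auto simp: inj_on_def sum.Sigma sum_distrib_left split_def intro!: sum.cong)
    also have "\<dots> \<le> (\<Sum>y\<in>V. p x y)"
    proof (intro sum_mono mult_right_le_one_le nonneg Suc.prems(1))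
      fix y assume y: "y \<in> V"
      show "(\<Sum>ys\<in>Q y. walk_weight p (y # ys)) \<le> 1"
      proof (rule Suc.IH[OF y])
        show "\<forall>ys\<in>Q y. set ys \<subseteq> V \<and> length ys \<le> M"
          using Suc.prems(2) by (force simp: Q_def)
        show "\<forall>ys\<in>Q y. \<forall>zs. ys @ zs \<in> Q y \<longrightarrow> zs = []"
          using Suc.prems(3) by (auto simp: Q_def)
      qed
      show "0 \<le> (\<Sum>ys\<in>Q y. walk_weight p (y # ys))"
        using Suc.prems(2) y by (auto simp: Q_def intro!: sum_nonneg walk_weight_nonneg[OF nonneg])
    qed
    also have "\<dots> \<le> 1" using sub Suc.prems(1) .
    finally show ?thesis .
  qed
qed
lemma sum_walk_weight_stopped_le_1:
  assumes V: "finite V" and nonneg: "\<And>x y. x \<in> V \<Longrightarrow> y \<in> V \<Longrightarrow> 0 \<le> p x y"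
    and sub: "\<And>x. x \<in> V \<Longrightarrow> (\<Sum>y\<in>V. p x y) \<le> 1"
    and x: "x \<in> V" and P: "finite P"
    and stopped: "\<And>xs. xs \<in> P \<Longrightarrow> hd xs = x \<and> set xs \<subseteq> V \<and> k < length xs \<and> last xs \<in> T \<and>
                     (\<forall>i. k \<le> i \<and> i < length xs - 1 \<longrightarrow> xs ! i \<notin> T)"
  shows "sum (walk_weight p) P \<le> 1"
proof -
  have Cons_tl: "x # tl xs = xs" if "xs \<in> P" for xs
    using stopped[OF that] by (cases xs) auto
  obtain M where M: "\<forall>xs\<in>P. length xs \<le> M"
    using P by (meson finite_imageI finite_nat_set_iff_bounded_le imageI)
  have "sum (walk_weight p) P = (\<Sum>ys\<in>tl ` P. walk_weight p (x # ys))"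
    by (subst sum.reindex) (auto simp: inj_on_def Cons_tl intro: sum.cong, metis Cons_tl)
  also have "\<dots> \<le> 1"
  proof (rule sum_walk_weight_Cons_prefix_free_le_1[OF V nonneg sub x])
    show "\<forall>ys\<in>tl ` P. set ys \<subseteq> V \<and> length ys \<le> M"
      using stopped M by (fastforce dest: list.set_sel(2)[rotated])
    show "\<forall>ys\<in>tl ` P. \<forall>zs. ys @ zs \<in> tl ` P \<longrightarrow> zs = []"
    proof (intro ballI allI impI)
      fix ys zs assume "ys \<in> tl ` P" "ys @ zs \<in> tl ` P"
      then have xs: "x # ys \<in> P" and xzs: "(x # ys) @ zs \<in> P"
        using Cons_tl by (metis imageE append_Cons)+
      show "zs = []"
      proof (rule ccontr)
        assume "zs \<noteq> []"
        then have "(x # ys @ zs) ! length ys \<notin> T"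
          using stopped[OF xzs] stopped[OF xs] by auto
        moreover have "last (x # ys) \<in> T" using stopped[OF xs] by blast
        moreover have "(x # ys @ zs) ! length ys = last (x # ys)"
          by (cases ys rule: rev_cases) (auto simp: nth_append)
        ultimately show False by simp
      qed
    qed
  qed
  finally show ?thesis .
qed

lemma sum_walk_weight_split_le:
  assumes "finite P" "finite Q"
    and "\<And>xs. xs \<in> P \<Longrightarrow> 0 \<le> walk_weight p xs" "\<And>xs. xs \<in> Q \<Longrightarrow> 0 \<le> walk_weight p xs"
    and split: "\<And>xs. xs \<in> X \<Longrightarrow> \<exists>k<length xs. take (Suc k) xs \<in> P \<and> drop k xs \<in> Q"
  shows "sum (walk_weight p) X \<le> sum (walk_weight p) P * sum (walk_weight p) Q"
proof -
  define k where "k xs = (SOME k. k < length xs \<and> take (Suc k) xs \<in> P \<and> drop k xs \<in> Q)" for xs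
  have k: "k xs < length xs \<and> take (Suc (k xs)) xs \<in> P \<and> drop (k xs) xs \<in> Q" if "xs \<in> X" for xs
    unfolding k_def using split[OF that] by (rule someI_ex)
  define g where "g xs = (take (Suc (k xs)) xs, drop (k xs) xs)" for xs
  \<comment> \<open>\<open>g\<close> is injective whatever the cut points are, since the two pieces overlap in one state.\<close>
  have "fst (g xs) @ tl (snd (g xs)) = xs" for xs
    by (simp add: g_def tl_drop drop_Suc[symmetric])
  then have inj: "inj_on g X"
    by (metis inj_onI)
  have "sum (walk_weight p) X = (\<Sum>xs\<in>X. (\<lambda>(l, r). walk_weight p l * walk_weight p r) (g xs))"
    using k by (intro sum.cong) (auto simp: g_def walk_weight_take_drop[symmetric])
  also have "\<dots> = (\<Sum>(l, r)\<in>g ` X. walk_weight p l * walk_weight p r)"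
    by (rule sum.reindex[OF inj, symmetric, unfolded comp_def])
  also have "\<dots> \<le> (\<Sum>(l, r)\<in>P \<times> Q. walk_weight p l * walk_weight p r)"
    using assms k by (intro sum_mono2) (auto simp: g_def)
  also have "\<dots> = sum (walk_weight p) P * sum (walk_weight p) Q"
    by (simp add: sum_product sum.cartesian_product)
  finally show ?thesis .
qed

section \<open>Chernoff bound for exponential holding times\<close>

lemma nn_integral_exp_exponential_density:
  fixes l g :: real
  assumes "l > 0" "g > 0"
  shows "(\<integral>\<^sup>+ x. ennreal (exp (- g * x)) \<partial>density lborel (exponential_density l))
    = ennreal (l / (l + g))"
proof -
  have "(\<integral>\<^sup>+ x. ennreal (exp (- g * x)) \<partial>density lborel (exponential_density l))
      = (\<integral>\<^sup>+ x. ennreal (exponential_density l x) * ennreal (exp (- g * x)) \<partial>lborel)"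
    by (subst nn_integral_density) (auto simp: exponential_density_def)
  also have "\<dots> = (\<integral>\<^sup>+ x. ennreal (l / (l + g)) * ennreal (exponential_density (l + g) x) \<partial>lborel)"
  proof (intro nn_integral_cong)
    fix x :: real
    have "exponential_density l x * exp (- g * x) = l / (l + g) * exponential_density (l + g) x"
      using assms
      by (auto simp: exponential_density_def field_simps exp_add[symmetric] algebra_simps)
    then show "ennreal (exponential_density l x) * ennreal (exp (- g * x))
        = ennreal (l / (l + g)) * ennreal (exponential_density (l + g) x)"
      using assms by (simp add: ennreal_mult'[symmetric] exponential_density_def)
  qed
  also have "\<dots> = ennreal (l / (l + g)) * (\<integral>\<^sup>+ x. ennreal (exponential_density (l + g) x) \<partial>lborel)"
    by (rule nn_integral_cmult) (auto simp: exponential_density_def)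
  also have "(\<integral>\<^sup>+ x. ennreal (exponential_density (l + g) x) \<partial>lborel) = 1"
  proof -
    interpret prob_space "density lborel (exponential_density (l + g))"
      using assms by (intro prob_space_exponential_density) auto
    show ?thesis
      using emeasure_space_1 by (subst (asm) emeasure_density) (auto simp: exponential_density_def)
  qed
  finally show ?thesis by simp
qed

lemma measure_sum_exponentials_less:
  fixes l :: "nat \<Rightarrow> real" and g t :: real
  assumes l: "\<And>i. i < n \<Longrightarrow> l i > 0" and g: "g > 0"
  defines "M \<equiv> \<Pi>\<^sub>M i\<in>{..<n}. density lborel (exponential_density (l i))"
  shows "measure M {E \<in> space M. (\<Sum>i<n. E i) < t} \<le> exp (g * t) * (\<Prod>i<n. l i / (l i + g))"
proof -
  define M' where "M' i = density lborel (exponential_density (if i < n then l i else 1))" for i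
  have M: "M = PiM {..<n} M'"
    unfolding M_def by (rule PiM_cong) (auto simp: M'_def)
  have prob: "prob_space (M' i)" for i
    unfolding M'_def using l by (intro prob_space_exponential_density) auto
  interpret product_sigma_finite M'
    unfolding product_sigma_finite_def using prob by (auto intro: prob_space_imp_sigma_finite)
  interpret P: prob_space "PiM {..<n} M'" by (rule prob_space_PiM) (use prob in auto)
  define X where "X = {E \<in> space (PiM {..<n} M'). (\<Sum>i<n. E i) < t}"
  have ratio_nonneg: "0 \<le> l i / (l i + g)" if "i < n" for i
    using l[OF that] g by simp
  then have bound_nonneg: "0 \<le> exp (g * t) * (\<Prod>i<n. l i / (l i + g))"
    by (intro mult_nonneg_nonneg prod_nonneg) auto
  have "emeasure (PiM {..<n} M') X = (\<integral>\<^sup>+ E. indicator X E \<partial>PiM {..<n} M')"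
    unfolding X_def M'_def by (intro nn_integral_indicator[symmetric]) measurable
  also have "\<dots> \<le> (\<integral>\<^sup>+ E. ennreal (exp (g * t)) * (\<Prod>i<n. ennreal (exp (- g * E i))) \<partial>PiM {..<n} M')"
  proof (intro nn_integral_mono)
    fix E
    have "1 \<le> exp (g * t) * (\<Prod>i<n. exp (- g * E i))" if "(\<Sum>i<n. E i) < t"
    proof -
      have "g * (\<Sum>i<n. E i) \<le> g * t" using that g by simp
      then have "1 \<le> exp (g * t) * exp (- g * (\<Sum>i<n. E i))"
        by (simp add: exp_add[symmetric])
      also have "exp (- g * (\<Sum>i<n. E i)) = (\<Prod>i<n. exp (- g * E i))"
        by (simp add: sum_distrib_left exp_sum)
      finally show ?thesis .
    qed
    then show "indicator X E \<le> ennreal (exp (g * t)) * (\<Prod>i<n. ennreal (exp (- g * E i)))"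
      by (auto simp: X_def indicator_def ennreal_mult'[symmetric] prod_ennreal
          intro!: ennreal_leI[where x = 1, simplified])
  qed
  also have "\<dots> = ennreal (exp (g * t)) * (\<integral>\<^sup>+ E. (\<Prod>i<n. ennreal (exp (- g * E i))) \<partial>PiM {..<n} M')"
    unfolding M'_def by (rule nn_integral_cmult) measurable
  also have "(\<integral>\<^sup>+ E. (\<Prod>i<n. ennreal (exp (- g * E i))) \<partial>PiM {..<n} M')
      = (\<Prod>i<n. \<integral>\<^sup>+ x. ennreal (exp (- g * x)) \<partial>M' i)"
    by (rule product_nn_integral_prod) (auto simp: M'_def)
  also have "\<dots> = ennreal (\<Prod>i<n. l i / (l i + g))"
    using l g nn_integral_exp_exponential_density
    by (subst prod_ennreal[symmetric]) (auto intro!: prod.cong simp: M'_def ratio_nonneg)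
  finally have "emeasure (PiM {..<n} M') X \<le> ennreal (exp (g * t) * (\<Prod>i<n. l i / (l i + g)))"
    by (simp add: ennreal_mult')
  then show ?thesis
    using bound_nonneg by (simp add: M X_def P.emeasure_eq_measure ennreal_le_iff)
qed

section \<open>The jump chain killed at rate \<open>\<gamma>\<close>\<close>

lemma path_weight_eq_walk_weight: "path_weight R \<Omega> xs = walk_weight (jump_prob R \<Omega>) xs"
  by (simp add: path_weight_def walk_weight_eq_prod)

lemma jump_prob_nonneg:
  "(\<And>z w. z \<in> V \<Longrightarrow> w \<in> V \<Longrightarrow> 0 \<le> Q z w) \<Longrightarrow> z \<in> V \<Longrightarrow> w \<in> V \<Longrightarrow> 0 \<le> jump_prob Q V z w"
  unfolding jump_prob_def rate_out_def by (intro divide_nonneg_nonneg sum_nonneg) auto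

lemma sum_jump_prob_le_1: "(\<Sum>w\<in>V. jump_prob Q V z w) \<le> 1"
  unfolding jump_prob_def rate_out_def sum_divide_distrib[symmetric]
  by (cases "sum (Q z) V = 0") auto

lemma prob_hit_before_in_target:
  assumes "A \<subseteq> \<Omega>" and "\<eta> \<in> A"
  shows "0 \<le> prob_hit_before R \<Omega> A \<eta> S" and "prob_hit_before R \<Omega> A \<eta> S \<le> 1"
proof -
  have "hit_paths \<Omega> A \<eta> n = {}" if "n \<noteq> 0" for n
    using that assms(2) by (auto simp: hit_paths_def)
  moreover have "hit_paths \<Omega> A \<eta> 0 = {[\<eta>]}"
  proof safe
    fix xs assume "xs \<in> hit_paths \<Omega> A \<eta> 0"
    then show "xs = [\<eta>]" by (cases xs) (auto simp: hit_paths_def)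
  qed (use assms in \<open>auto simp: hit_paths_def\<close>)
  ultimately have eq: "prob_hit_before R \<Omega> A \<eta> S = holding_sum_lt R \<Omega> [\<eta>] S"
    unfolding prob_hit_before_def
    by (subst suminf_finite[of "{0}"]) (auto simp: path_weight_def)
  interpret prob_space "holding_law R \<Omega> [\<eta>]"
    unfolding holding_law_def by (rule prob_space_PiM) simp
  show "0 \<le> prob_hit_before R \<Omega> A \<eta> S" "prob_hit_before R \<Omega> A \<eta> S \<le> 1"
    by (simp_all add: eq holding_sum_lt_def)
qed

locale killed_chain =
  fixes \<Omega> :: "'a set" and R :: "'a \<Rightarrow> 'a \<Rightarrow> real" and \<nu> :: "'a \<Rightarrow> real" and \<gamma> :: real
  assumes finite_states: "finite \<Omega>"
    and rates_nonneg: "\<And>x y. x \<in> \<Omega> \<Longrightarrow> y \<in> \<Omega> \<Longrightarrow> 0 \<le> R x y"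
    and stationary: "stationary R \<Omega> \<nu>"
    and stationary_pos: "\<And>x. x \<in> \<Omega> \<Longrightarrow> 0 < \<nu> x"
    and killing_pos: "0 < \<gamma>"
begin

abbreviation "lam \<equiv> rate_out R \<Omega>"

text \<open>The jump chain of the process killed at rate \<open>\<gamma>\<close>, and its time reversal with respect
  to \<open>\<nu>\<close>.\<close>

definition killed_jump :: "'a \<Rightarrow> 'a \<Rightarrow> real" where
  "killed_jump x y = R x y / (lam x + \<gamma>)"

definition reversed_jump :: "'a \<Rightarrow> 'a \<Rightarrow> real" where
  "reversed_jump x y = \<nu> y * R y x / (\<nu> x * (lam x + \<gamma>))"

lemma rate_out_nonneg: "x \<in> \<Omega> \<Longrightarrow> 0 \<le> lam x"
  unfolding rate_out_def by (auto intro!: sum_nonneg rates_nonneg)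

lemma rate_out_killing_pos: "x \<in> \<Omega> \<Longrightarrow> 0 < lam x + \<gamma>"
  using rate_out_nonneg killing_pos by (simp add: add_nonneg_pos)

lemma killed_jump_nonneg: "x \<in> \<Omega> \<Longrightarrow> y \<in> \<Omega> \<Longrightarrow> 0 \<le> killed_jump x y"
  unfolding killed_jump_def using rates_nonneg rate_out_killing_pos by (simp add: less_imp_le)

lemma reversed_jump_nonneg: "x \<in> \<Omega> \<Longrightarrow> y \<in> \<Omega> \<Longrightarrow> 0 \<le> reversed_jump x y"
  unfolding reversed_jump_def using rates_nonneg[of y x] rate_out_killing_pos[of x] stationary_pos
  by (simp add: less_imp_le)

lemma sum_reversed_jump_le_1:
  assumes x: "x \<in> \<Omega>"
  shows "(\<Sum>y\<in>\<Omega>. reversed_jump x y) \<le> 1"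
proof -
  have "(\<Sum>y\<in>\<Omega>. reversed_jump x y) = (\<Sum>y\<in>\<Omega>. \<nu> y * R y x) / (\<nu> x * (lam x + \<gamma>))"
    unfolding reversed_jump_def by (simp add: sum_divide_distrib)
  also have "\<dots> = lam x / (lam x + \<gamma>)"
    using stationary x stationary_pos[OF x] unfolding stationary_def by auto
  also have "\<dots> \<le> 1"
    using rate_out_killing_pos[OF x] killing_pos by simp
  finally show ?thesis .
qed

lemma killed_jump_reversal:
  "x \<in> \<Omega> \<Longrightarrow> y \<in> \<Omega> \<Longrightarrow>
    \<nu> x * (lam x + \<gamma>) * killed_jump x y = \<nu> y * (lam y + \<gamma>) * reversed_jump y x"
  using rate_out_killing_pos[of x] rate_out_killing_pos[of y] stationary_pos[of y]
  by (simp add: killed_jump_def reversed_jump_def)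

lemma killed_walk_weight_nonneg: "set xs \<subseteq> \<Omega> \<Longrightarrow> 0 \<le> walk_weight killed_jump xs"
  by (rule walk_weight_nonneg[OF killed_jump_nonneg])

lemma killed_walk_weight_snoc_reversal:
  assumes "zs \<noteq> []" "set zs \<subseteq> \<Omega>"
  shows "\<nu> (hd zs) * (lam (hd zs) + \<gamma>) * walk_weight killed_jump (zs @ [a])
    = \<nu> (last zs) * R (last zs) a * walk_weight reversed_jump (rev zs)"
proof -
  have "last zs \<in> \<Omega>" using assms by auto
  have "\<nu> (hd zs) * (lam (hd zs) + \<gamma>) * walk_weight killed_jump (zs @ [a])
      = \<nu> (hd zs) * (lam (hd zs) + \<gamma>) * walk_weight killed_jump zs * killed_jump (last zs) a"
    using assms(1) by (simp add: walk_weight_snoc)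
  also have "\<dots> = \<nu> (last zs) * (lam (last zs) + \<gamma>) * walk_weight reversed_jump (rev zs)
      * killed_jump (last zs) a"
    using walk_weight_rev[where a = "\<lambda>x. \<nu> x * (lam x + \<gamma>)", OF killed_jump_reversal assms] by simp
  also have "\<dots> = \<nu> (last zs) * R (last zs) a * walk_weight reversed_jump (rev zs)"
    using rate_out_killing_pos[OF \<open>last zs \<in> \<Omega>\<close>] by (simp add: killed_jump_def)
  finally show ?thesis .
qed

definition entrance_flow :: "'a set \<Rightarrow> real" where
  "entrance_flow A = (\<Sum>y\<in>\<Omega>. \<nu> y * (if y \<notin> A then (\<Sum>a\<in>A. R y a) else 0))"

lemma entrance_flow_eq: "entrance_flow A = (\<Sum>y\<in>\<Omega> - A. \<Sum>a\<in>A. \<nu> y * R y a)"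
proof -
  have "entrance_flow A = (\<Sum>y\<in>\<Omega>. if y \<notin> A then \<nu> y * (\<Sum>a\<in>A. R y a) else 0)"
    unfolding entrance_flow_def by (intro sum.cong) auto
  also have "\<dots> = (\<Sum>y\<in>\<Omega> - A. \<nu> y * (\<Sum>a\<in>A. R y a))"
    using finite_states by (simp add: sum.If_cases Diff_eq Compl_eq)
  finally show ?thesis by (simp add: sum_distrib_left)
qed

lemma entrance_flow_nonneg: "A \<subseteq> \<Omega> \<Longrightarrow> 0 \<le> entrance_flow A"
  unfolding entrance_flow_def
  by (auto intro!: sum_nonneg mult_nonneg_nonneg rates_nonneg less_imp_le[OF stationary_pos])

abbreviation "enl_jump \<equiv> jump_prob (enl_rates R \<gamma>) (enl_space \<Omega>)"

lemma finite_enl_space: "finite (enl_space \<Omega>)"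
  using finite_states by (simp add: enl_space_def)

lemma enl_jump_nonneg: "z \<in> enl_space \<Omega> \<Longrightarrow> w \<in> enl_space \<Omega> \<Longrightarrow> 0 \<le> enl_jump z w"
  by (rule jump_prob_nonneg) (use killing_pos in \<open>auto simp: enl_space_def intro: rates_nonneg\<close>)

lemma rate_out_enl_Inl:
  assumes x: "x \<in> \<Omega>"
  shows "rate_out (enl_rates R \<gamma>) (enl_space \<Omega>) (Inl x) = lam x + \<gamma>"
proof -
  have "rate_out (enl_rates R \<gamma>) (enl_space \<Omega>) (Inl x)
      = (\<Sum>y\<in>Inl ` \<Omega>. enl_rates R \<gamma> (Inl x) y) + (\<Sum>y\<in>Inr ` \<Omega>. enl_rates R \<gamma> (Inl x) y)"
    unfolding rate_out_def enl_space_def using finite_states by (intro sum.union_disjoint) auto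
  also have "\<dots> = lam x + (\<Sum>y\<in>\<Omega>. if x = y then \<gamma> else 0)"
    by (simp add: sum.reindex rate_out_def)
  finally show ?thesis using x finite_states by simp
qed

lemma enl_jump_Inl: "x \<in> \<Omega> \<Longrightarrow> enl_jump (Inl x) (Inl y) = killed_jump x y"
  by (simp add: jump_prob_def rate_out_enl_Inl killed_jump_def)

lemma enl_walk_weight_map_Inl:
  "set xs \<subseteq> \<Omega> \<Longrightarrow> walk_weight enl_jump (map Inl xs) = walk_weight killed_jump xs"
  unfolding walk_weight_map by (rule walk_weight_cong) (auto simp: enl_jump_Inl)

end

section \<open>Decomposition of hitting walks\<close>

locale killed_chain_hitting = killed_chain +
  fixes A :: "'a set" and \<eta> :: 'a
  assumes target_subset: "A \<subseteq> \<Omega>" and start: "\<eta> \<in> \<Omega>"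
begin

definition hit_walks :: "nat \<Rightarrow> 'a list set" where
  "hit_walks M = {xs. xs \<noteq> [] \<and> set xs \<subseteq> \<Omega> \<and> length xs \<le> M \<and> xs ! 0 = \<eta> \<and>
     xs ! (length xs - 1) \<in> A \<and> (\<forall>i<length xs - 1. xs ! i \<notin> A)}"

definition loop_walks :: "nat \<Rightarrow> 'a list set" where
  "loop_walks M = {xs. xs \<noteq> [] \<and> set xs \<subseteq> \<Omega> \<and> length xs \<le> M \<and> xs ! 0 = \<eta> \<and>
     xs ! (length xs - 1) = \<eta> \<and> (\<forall>i<length xs. xs ! i \<notin> A)}"

definition excursions :: "nat \<Rightarrow> 'a list set" where
  "excursions M = {xs. 2 \<le> length xs \<and> set xs \<subseteq> \<Omega> \<and> length xs \<le> M \<and> xs ! 0 = \<eta> \<and>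
     xs ! (length xs - 1) = \<eta> \<and> (\<forall>i<length xs. xs ! i \<notin> A) \<and>
     (\<forall>i. 0 < i \<and> i < length xs - 1 \<longrightarrow> xs ! i \<noteq> \<eta>)}"

definition exit_walks :: "nat \<Rightarrow> 'a list set" where
  "exit_walks M = {xs. xs \<noteq> [] \<and> set xs \<subseteq> \<Omega> \<and> length xs \<le> M \<and> xs ! 0 = \<eta> \<and>
     xs ! (length xs - 1) \<in> A \<and> (\<forall>i<length xs - 1. xs ! i \<notin> A \<and> (0 < i \<longrightarrow> xs ! i \<noteq> \<eta>))}"

definition arrival_walks :: "'a \<Rightarrow> nat \<Rightarrow> 'a list set" where
  "arrival_walks y M = {zs. zs \<noteq> [] \<and> set zs \<subseteq> \<Omega> \<and> length zs \<le> M \<and> zs ! 0 = y \<and>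
     zs ! (length zs - 1) = \<eta> \<and> (\<forall>i<length zs. zs ! i \<notin> A) \<and> (\<forall>i<length zs - 1. zs ! i \<noteq> \<eta>)}"

lemma finite_walk_sets:
  "finite (hit_walks M)" "finite (loop_walks M)" "finite (excursions M)"
  "finite (exit_walks M)" "finite (arrival_walks y M)"
  by (auto intro: finite_subset[OF _ finite_lists_length_le[OF finite_states, of M]]
      simp: hit_walks_def loop_walks_def excursions_def exit_walks_def arrival_walks_def)

lemma hit_walk_split_last_visit:
  assumes "\<eta> \<notin> A" and "xs \<in> hit_walks M"
  shows "\<exists>k<length xs. take (Suc k) xs \<in> loop_walks M \<and> drop k xs \<in> exit_walks M"
proof -
  have H: "xs \<noteq> []" "set xs \<subseteq> \<Omega>" "length xs \<le> M" "xs ! 0 = \<eta>" "xs ! (length xs - 1) \<in> A"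
    "\<forall>i<length xs - 1. xs ! i \<notin> A"
    using assms(2) by (auto simp: hit_walks_def)
  define k where "k = Max {i. i < length xs \<and> xs ! i = \<eta>}"
  have k_mem: "k \<in> {i. i < length xs \<and> xs ! i = \<eta>}"
    unfolding k_def using H by (intro Max_in) auto
  have k_max: "j \<le> k" if "j < length xs" "xs ! j = \<eta>" for j
    unfolding k_def using that by (intro Max_ge) auto
  have "k \<noteq> length xs - 1" using k_mem H(5) assms(1) by auto
  then have k: "k < length xs - 1" "xs ! k = \<eta>" "\<forall>j. k < j \<and> j < length xs \<longrightarrow> xs ! j \<noteq> \<eta>"
    using k_mem k_max by (auto simp: not_le[symmetric])
  have "take (Suc k) xs \<in> loop_walks M"
    unfolding loop_walks_def using H k set_take_subset[of "Suc k" xs] by (auto simp: min_def)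
  moreover have "drop k xs \<in> exit_walks M"
  proof -
    have "set (drop k xs) \<subseteq> \<Omega>" using H set_drop_subset[of k xs] by auto
    moreover have "\<forall>i<length xs - k - 1. xs ! (k + i) \<notin> A \<and> (0 < i \<longrightarrow> xs ! (k + i) \<noteq> \<eta>)"
      using H k by auto
    moreover have "k + (length xs - k - 1) = length xs - 1" using k by linarith
    ultimately show ?thesis
      unfolding exit_walks_def using H k by auto
  qed
  ultimately show ?thesis using k by auto
qed

lemma loop_walk_split_first_return:
  assumes "xs \<in> loop_walks M" and "2 \<le> length xs"
  shows "\<exists>k<length xs. take (Suc k) xs \<in> excursions M \<and> drop k xs \<in> loop_walks M"
proof -
  have H: "set xs \<subseteq> \<Omega>" "length xs \<le> M" "xs ! 0 = \<eta>" "xs ! (length xs - 1) = \<eta>"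
    "\<forall>i<length xs. xs ! i \<notin> A"
    using assms(1) by (auto simp: loop_walks_def)
  define k where "k = Min {i. 0 < i \<and> i < length xs \<and> xs ! i = \<eta>}"
  have "length xs - 1 \<in> {i. 0 < i \<and> i < length xs \<and> xs ! i = \<eta>}"
    using H assms(2) by auto
  then have k_mem: "k \<in> {i. 0 < i \<and> i < length xs \<and> xs ! i = \<eta>}"
    unfolding k_def by (intro Min_in) auto
  have k_min: "k \<le> j" if "0 < j" "j < length xs" "xs ! j = \<eta>" for j
    unfolding k_def using that by (intro Min_le) auto
  have "xs ! j \<noteq> \<eta>" if "0 < j" "j < k" for j
    using k_mem k_min[of j] that by force
  then have k: "0 < k" "k < length xs" "xs ! k = \<eta>" "\<forall>j. 0 < j \<and> j < k \<longrightarrow> xs ! j \<noteq> \<eta>"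
    using k_mem by auto
  have "take (Suc k) xs \<in> excursions M"
    unfolding excursions_def using H k set_take_subset[of "Suc k" xs] by (auto simp: min_def)
  moreover have "drop k xs \<in> loop_walks M"
  proof -
    have "set (drop k xs) \<subseteq> \<Omega>" using H set_drop_subset[of k xs] by auto
    moreover have "\<forall>i<length xs - k. xs ! (k + i) \<notin> A" using H k by auto
    moreover have "k + (length xs - k - 1) = length xs - 1" using k by linarith
    ultimately show ?thesis
      unfolding loop_walks_def using H k by auto
  qed
  ultimately show ?thesis using k by auto
qed

lemma sum_hit_walks_le:
  assumes "\<eta> \<notin> A"
  shows "sum (walk_weight killed_jump) (hit_walks M)
    \<le> sum (walk_weight killed_jump) (loop_walks M) * sum (walk_weight killed_jump) (exit_walks M)"
  using hit_walk_split_last_visit[OF assms]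
  by (intro sum_walk_weight_split_le[OF finite_walk_sets(2,4)])
    (auto simp: loop_walks_def exit_walks_def intro: killed_walk_weight_nonneg)

lemma sum_loop_walks_le:
  "sum (walk_weight killed_jump) (loop_walks M)
    \<le> 1 + sum (walk_weight killed_jump) (excursions M)
          * sum (walk_weight killed_jump) (loop_walks M)"
proof -
  define short where "short = {xs \<in> loop_walks M. length xs < 2}"
  define long where "long = {xs \<in> loop_walks M. 2 \<le> length xs}"
  have "short \<subseteq> {[\<eta>]}"
  proof
    fix xs assume "xs \<in> short"
    then have "xs \<noteq> []" "length xs < 2" "xs ! 0 = \<eta>" by (auto simp: short_def loop_walks_def)
    then show "xs \<in> {[\<eta>]}" by (cases xs) auto
  qed
  then have "short = {} \<or> short = {[\<eta>]}" by (rule subset_singletonD)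
  then have short_le: "sum (walk_weight killed_jump) short \<le> 1" by auto
  have long_le: "sum (walk_weight killed_jump) long
      \<le> sum (walk_weight killed_jump) (excursions M) * sum (walk_weight killed_jump) (loop_walks M)"
    using loop_walk_split_first_return
    by (intro sum_walk_weight_split_le[OF finite_walk_sets(3,2)])
      (auto simp: long_def loop_walks_def excursions_def intro: killed_walk_weight_nonneg)
  have "loop_walks M = short \<union> long" "short \<inter> long = {}"
    by (auto simp: short_def long_def)
  moreover have "finite short" "finite long"
    using finite_walk_sets(2) by (auto simp: short_def long_def)
  ultimately have "sum (walk_weight killed_jump) (loop_walks M)
      = sum (walk_weight killed_jump) short + sum (walk_weight killed_jump) long"
    by (simp add: sum.union_disjoint)
  with short_le long_le show ?thesis by linarith
qed

lemma sum_arrival_walks_le_1: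
  assumes "y \<in> \<Omega>"
  shows "sum (walk_weight reversed_jump) (arrival_walks y M) \<le> 1"
proof (rule sum_walk_weight_stopped_le_1[OF finite_states reversed_jump_nonneg
      sum_reversed_jump_le_1 assms finite_walk_sets(5), where k = 0 and T = "{\<eta>}"])
  fix zs assume "zs \<in> arrival_walks y M"
  then have "zs \<noteq> []" "set zs \<subseteq> \<Omega>" "zs ! 0 = y" "zs ! (length zs - 1) = \<eta>"
    "\<forall>i<length zs - 1. zs ! i \<noteq> \<eta>"
    by (simp_all add: arrival_walks_def)
  then show "hd zs = y \<and> set zs \<subseteq> \<Omega> \<and> 0 < length zs \<and> last zs \<in> {\<eta>} \<and>
      (\<forall>i. 0 \<le> i \<and> i < length zs - 1 \<longrightarrow> zs ! i \<notin> {\<eta>})"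
    by (simp add: hd_conv_nth last_conv_nth)
qed

lemma exit_walk_reversal:
  assumes "\<eta> \<notin> A" and "xs \<in> exit_walks M"
  obtains zs a where "xs = zs @ [a]" "a \<in> A" "last zs \<in> \<Omega> - A" "rev zs \<in> arrival_walks (last zs) M"
    "\<nu> \<eta> * (lam \<eta> + \<gamma>) * walk_weight killed_jump xs
      = \<nu> (last zs) * R (last zs) a * walk_weight reversed_jump (rev zs)"
proof -
  have H: "xs \<noteq> []" "set xs \<subseteq> \<Omega>" "length xs \<le> M" "xs ! 0 = \<eta>" "xs ! (length xs - 1) \<in> A"
    "\<forall>i<length xs - 1. xs ! i \<notin> A \<and> (0 < i \<longrightarrow> xs ! i \<noteq> \<eta>)"
    using assms(2) by (auto simp: exit_walks_def)
  define zs where "zs = butlast xs"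
  define a where "a = last xs"
  define y where "y = last zs"
  have xs: "xs = zs @ [a]" using H(1) by (simp add: zs_def a_def)
  have "length xs \<noteq> 1" using H(4,5) assms(1) by auto
  then have len2: "2 \<le> length xs" using H(1) by (cases xs) (auto simp: Suc_le_eq)
  then have len: "length zs = length xs - 1" and zs_ne: "zs \<noteq> []"
    by (simp_all add: zs_def flip: length_greater_0_conv)
  have zs_nth: "zs ! i = xs ! i" if "i < length zs" for i
    using that by (simp add: zs_def nth_butlast)
  have a: "a \<in> A" using H(1,5) by (simp add: a_def last_conv_nth)
  have zs_set: "set zs \<subseteq> \<Omega>" using H(2) by (simp add: zs_def) (meson in_set_butlastD subset_iff)
  have hd_zs: "hd zs = \<eta>" using zs_ne zs_nth[of 0] H(4) by (simp add: hd_conv_nth)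
  have y: "y = xs ! (length zs - 1)" using zs_ne zs_nth by (simp add: y_def last_conv_nth)
  have "y \<in> \<Omega>" using zs_ne zs_set by (auto simp: y_def)
  moreover have "y \<notin> A" using H(6) y len len2 by auto
  moreover have "rev zs \<in> arrival_walks y M"
  proof -
    have "\<forall>i<length zs. rev zs ! i \<notin> A"
      using H(6) len zs_nth by (auto simp: rev_nth)
    moreover have "rev zs ! i \<noteq> \<eta>" if i: "i < length zs - 1" for i
    proof -
      have "rev zs ! i = xs ! (length zs - Suc i)" using i zs_nth by (simp add: rev_nth)
      moreover have "0 < length zs - Suc i" "length zs - Suc i < length xs - 1" using i len by auto
      ultimately show ?thesis using H(6) by auto
    qed
    moreover have "rev zs ! 0 = y" using zs_ne by (simp add: rev_nth y_def last_conv_nth)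
    moreover have "rev zs ! (length zs - 1) = \<eta>"
      using zs_ne hd_zs by (simp add: rev_nth hd_conv_nth)
    ultimately show ?thesis using len zs_ne zs_set H(3) by (auto simp: arrival_walks_def)
  qed
  moreover have "\<nu> \<eta> * (lam \<eta> + \<gamma>) * walk_weight killed_jump xs
      = \<nu> y * R y a * walk_weight reversed_jump (rev zs)"
    using killed_walk_weight_snoc_reversal[OF zs_ne zs_set] by (simp add: xs hd_zs y_def)
  ultimately show ?thesis using that xs a by (simp add: y_def)
qed

text \<open>Reversing the part of a hitting walk after its last visit to \<open>\<eta>\<close> turns it into an entrance
  step \<open>y \<rightarrow> a\<close> from \<open>\<Omega> - A\<close> into \<open>A\<close>, weighted by \<open>\<nu>\<close>, followed by a reversed walk from \<open>y\<close> which
  stops at its first visit to \<open>\<eta>\<close>.\<close>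
lemma sum_exit_walks_le:
  assumes "\<eta> \<notin> A"
  shows "\<nu> \<eta> * (lam \<eta> + \<gamma>) * sum (walk_weight killed_jump) (exit_walks M) \<le> entrance_flow A"
proof -
  define G where "G xs = (last (butlast xs), last xs, rev (butlast xs))" for xs :: "'a list"
  define h where "h = (\<lambda>(y, a, zs). \<nu> y * R y a * walk_weight reversed_jump zs)"
  define T where "T = (SIGMA y:\<Omega> - A. A \<times> arrival_walks y M)"
  have G: "G xs \<in> T \<and> \<nu> \<eta> * (lam \<eta> + \<gamma>) * walk_weight killed_jump xs = h (G xs)"
    if "xs \<in> exit_walks M" for xs
    by (rule exit_walk_reversal[OF assms that]) (auto simp: G_def T_def h_def)
  have "inj_on G (exit_walks M)"
  proof (rule inj_onI)
    fix xs ys assume "G xs = G ys" "xs \<in> exit_walks M" "ys \<in> exit_walks M"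
    then have "butlast xs = butlast ys" "last xs = last ys" "xs \<noteq> []" "ys \<noteq> []"
      by (auto simp: G_def exit_walks_def)
    then show "xs = ys" by (metis append_butlast_last_id)
  qed
  then have "\<nu> \<eta> * (lam \<eta> + \<gamma>) * sum (walk_weight killed_jump) (exit_walks M)
      = sum h (G ` exit_walks M)"
    by (simp add: sum_distrib_left G sum.reindex)
  also have "\<dots> \<le> sum h T"
  proof (rule sum_mono2)
    show "finite T"
      unfolding T_def using finite_states target_subset finite_walk_sets(5)
      by (intro finite_SigmaI finite_cartesian_product) (auto intro: finite_subset)
    show "G ` exit_walks M \<subseteq> T" using G by blast
    show "0 \<le> h b" if "b \<in> T - G ` exit_walks M" for b
      using that target_subset
      by (auto simp: T_def h_def arrival_walks_def intro!: mult_nonneg_nonneg rates_nonneg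
          walk_weight_nonneg[OF reversed_jump_nonneg] less_imp_le[OF stationary_pos])
  qed
  also have "\<dots> = (\<Sum>y\<in>\<Omega> - A. \<Sum>a\<in>A.
      \<nu> y * R y a * sum (walk_weight reversed_jump) (arrival_walks y M))"
    unfolding T_def h_def
    using finite_states finite_subset[OF target_subset finite_states] finite_walk_sets(5)
    by (simp add: sum.Sigma[symmetric] sum.cartesian_product[symmetric] sum_distrib_left)
  also have "\<dots> \<le> (\<Sum>y\<in>\<Omega> - A. \<Sum>a\<in>A. \<nu> y * R y a)"
  proof (intro sum_mono)
    fix y a assume "y \<in> \<Omega> - A" "a \<in> A"
    moreover from this have "0 \<le> \<nu> y * R y a"
      using target_subset
      by (auto intro!: mult_nonneg_nonneg rates_nonneg less_imp_le[OF stationary_pos])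
    ultimately show
      "\<nu> y * R y a * sum (walk_weight reversed_jump) (arrival_walks y M) \<le> \<nu> y * R y a"
      using sum_arrival_walks_le_1 by (simp add: mult_left_le)
  qed
  also have "\<dots> = entrance_flow A"
    by (simp add: entrance_flow_eq)
  finally show ?thesis .
qed

abbreviation escape_star :: real where
  "escape_star \<equiv> escape_prob (enl_rates R \<gamma>) (enl_space \<Omega>) (Inr ` \<Omega>) (Inl \<eta>)"

definition escape_term :: "nat \<Rightarrow> real" where
  "escape_term n = (\<Sum>xs\<in>esc_paths (enl_space \<Omega>) (Inr ` \<Omega>) (Inl \<eta>) (Suc n).
     walk_weight enl_jump xs)"

lemma escape_star_eq_suminf: "escape_star = suminf escape_term"
  by (simp add: escape_prob_def escape_term_def[abs_def] path_weight_eq_walk_weight)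

lemma finite_esc_paths: "finite (esc_paths (enl_space \<Omega>) B x n)"
  by (rule finite_subset[OF _ finite_lists_length_le[OF finite_enl_space, of "Suc n"]])
    (auto simp: esc_paths_def)

lemma escape_term_nonneg: "0 \<le> escape_term n"
  unfolding escape_term_def
  by (intro sum_nonneg walk_weight_nonneg[OF enl_jump_nonneg]) (auto simp: esc_paths_def)

lemma esc_path_stopped:
  assumes "xs \<in> esc_paths (enl_space \<Omega>) (Inr ` \<Omega>) (Inl \<eta>) (Suc n)"
  shows "hd xs = Inl \<eta> \<and> set xs \<subseteq> enl_space \<Omega> \<and> 1 < length xs \<and> last xs \<in> Inr ` \<Omega> \<and>
    (\<forall>i. 1 \<le> i \<and> i < length xs - 1 \<longrightarrow> xs ! i \<notin> Inr ` \<Omega> \<union> {Inl \<eta>})"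
proof -
  have "length xs = Suc (Suc n)" "set xs \<subseteq> enl_space \<Omega>" "xs ! 0 = Inl \<eta>" "xs ! Suc n \<in> Inr ` \<Omega>"
    "\<forall>i\<in>{1..<Suc n}. xs ! i \<notin> Inr ` \<Omega> \<and> xs ! i \<noteq> Inl \<eta>"
    using assms by (simp_all add: esc_paths_def)
  moreover from this(1) have "xs \<noteq> []" by auto
  ultimately show ?thesis by (simp add: hd_conv_nth last_conv_nth)
qed

lemma excursion_map_Inl_stopped:
  assumes "us \<in> excursions M"
  defines "xs \<equiv> map Inl us :: ('a + 'a) list"
  shows "hd xs = Inl \<eta> \<and> set xs \<subseteq> enl_space \<Omega> \<and> 1 < length xs \<and> last xs = Inl \<eta> \<and>
    (\<forall>i. 1 \<le> i \<and> i < length xs - 1 \<longrightarrow> xs ! i \<notin> Inr ` \<Omega> \<union> {Inl \<eta>})"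
proof -
  have us: "2 \<le> length us" "set us \<subseteq> \<Omega>" "us ! 0 = \<eta>" "us ! (length us - 1) = \<eta>"
    "\<forall>i. 0 < i \<and> i < length us - 1 \<longrightarrow> us ! i \<noteq> \<eta>"
    using assms(1) by (simp_all add: excursions_def)
  moreover from us(1) have "us \<noteq> []" by auto
  moreover have "\<forall>i. 1 \<le> i \<and> i < length xs - 1 \<longrightarrow> xs ! i \<notin> Inr ` \<Omega> \<union> {Inl \<eta>}"
    using us(5) by (auto simp: xs_def)
  ultimately show ?thesis
    by (auto simp: xs_def hd_map last_map hd_conv_nth last_conv_nth enl_space_def)
qed

text \<open>Escaping to \<open>\<Omega>\<^sup>\<star>\<close> and returning to \<open>\<eta>\<close> inside \<open>\<Omega> - A\<close> are disjoint events for the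
  enlarged chain, both decided at the first visit to \<open>\<Omega>\<^sup>\<star> \<union> {\<eta>}\<close> after time 0.\<close>
lemma escape_terms_excursions_le_1:
  "(\<Sum>n<K. escape_term n) + sum (walk_weight killed_jump) (excursions M) \<le> 1"
proof -
  define escapes where "escapes = (\<Union>n<K. esc_paths (enl_space \<Omega>) (Inr ` \<Omega>) (Inl \<eta>) (Suc n))"
  define returns where "returns = map (Inl :: 'a \<Rightarrow> 'a + 'a) ` excursions M"
  have finite: "finite escapes" "finite returns"
    using finite_esc_paths finite_walk_sets(3) by (auto simp: escapes_def returns_def)
  have "sum (walk_weight enl_jump) (escapes \<union> returns) \<le> 1"
  proof (rule sum_walk_weight_stopped_le_1[OF finite_enl_space enl_jump_nonneg sum_jump_prob_le_1
        _ _, where k = 1 and T = "Inr ` \<Omega> \<union> {Inl \<eta>}"])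
    show "Inl \<eta> \<in> enl_space \<Omega>" using start by (simp add: enl_space_def)
    show "finite (escapes \<union> returns)" using finite by simp
    fix xs assume "xs \<in> escapes \<union> returns"
    then show "hd xs = Inl \<eta> \<and> set xs \<subseteq> enl_space \<Omega> \<and> 1 < length xs \<and> last xs \<in> Inr ` \<Omega> \<union> {Inl \<eta>} \<and>
        (\<forall>i. 1 \<le> i \<and> i < length xs - 1 \<longrightarrow> xs ! i \<notin> Inr ` \<Omega> \<union> {Inl \<eta>})"
      using esc_path_stopped excursion_map_Inl_stopped unfolding escapes_def returns_def by blast
  qed
  moreover have "escapes \<inter> returns = {}"
    using esc_path_stopped excursion_map_Inl_stopped unfolding escapes_def returns_def by fastforce
  moreover have "sum (walk_weight enl_jump) escapes = (\<Sum>n<K. escape_term n)"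
    unfolding escapes_def escape_term_def
  proof (subst sum.UNION_disjoint)
    show "\<forall>i\<in>{..<K}. \<forall>j\<in>{..<K}. i \<noteq> j \<longrightarrow> esc_paths (enl_space \<Omega>) (Inr ` \<Omega>) (Inl \<eta>) (Suc i)
        \<inter> esc_paths (enl_space \<Omega>) (Inr ` \<Omega>) (Inl \<eta>) (Suc j) = {}"
      by (auto simp: esc_paths_def)
  qed (simp_all add: finite_esc_paths)
  moreover have "sum (walk_weight enl_jump) returns = sum (walk_weight killed_jump) (excursions M)"
    unfolding returns_def
    by (subst sum.reindex)
      (auto simp: inj_on_def excursions_def intro!: sum.cong enl_walk_weight_map_Inl)
  ultimately show ?thesis
    using finite by (simp add: sum.union_disjoint)
qed

lemma summable_escape_term: "summable escape_term"
proof (rule summableI_nonneg_bounded[OF escape_term_nonneg])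
  fix n
  have "0 \<le> sum (walk_weight killed_jump) (excursions 0)"
    by (auto intro!: sum_nonneg killed_walk_weight_nonneg simp: excursions_def)
  then show "sum escape_term {..<n} \<le> 1"
    using escape_terms_excursions_le_1[of n 0] by linarith
qed

lemma escape_star_le: "escape_star \<le> 1 - sum (walk_weight killed_jump) (excursions M)"
  unfolding escape_star_eq_suminf using escape_terms_excursions_le_1[of _ M]
  by (intro suminf_le_const[OF summable_escape_term]) (simp add: algebra_simps)

lemma escape_star_pos: "0 < escape_star"
proof -
  have path: "[Inl \<eta>, Inr \<eta>] \<in> esc_paths (enl_space \<Omega>) (Inr ` \<Omega>) (Inl \<eta>) (Suc 0)"
    using start by (auto simp: esc_paths_def enl_space_def)
  have "0 < \<gamma> / (lam \<eta> + \<gamma>)"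
    using killing_pos rate_out_killing_pos[OF start] by simp
  also have "\<dots> = walk_weight enl_jump [Inl \<eta>, Inr \<eta>]"
    using start by (simp add: jump_prob_def rate_out_enl_Inl)
  also have "\<dots> \<le> escape_term 0"
    unfolding escape_term_def
    by (rule member_le_sum[OF path _ finite_esc_paths])
      (auto simp: esc_paths_def intro!: walk_weight_nonneg[OF enl_jump_nonneg])
  also have "\<dots> \<le> escape_star"
    unfolding escape_star_eq_suminf
    using sum_le_suminf[OF summable_escape_term, of "{..<1}"] escape_term_nonneg by simp
  finally show ?thesis .
qed

lemma cap_star_eq: "cap_star R \<Omega> \<nu> \<gamma> \<eta> = \<nu> \<eta> / 2 * (lam \<eta> + \<gamma>) * escape_star"
  by (simp add: cap_star_def capacity_def rate_out_enl_Inl start)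

lemma sum_hit_walks_mult_le:
  assumes "\<eta> \<notin> A"
  shows "\<nu> \<eta> * (lam \<eta> + \<gamma>) * escape_star * sum (walk_weight killed_jump) (hit_walks M)
    \<le> entrance_flow A"
proof -
  define loops where "loops = sum (walk_weight killed_jump) (loop_walks M)"
  define exits where "exits = sum (walk_weight killed_jump) (exit_walks M)"
  define c where "c = \<nu> \<eta> * (lam \<eta> + \<gamma>)"
  have loops_nonneg: "0 \<le> loops"
    unfolding loops_def by (auto simp: loop_walks_def intro!: sum_nonneg killed_walk_weight_nonneg)
  have exits_nonneg: "0 \<le> exits"
    unfolding exits_def by (auto simp: exit_walks_def intro!: sum_nonneg killed_walk_weight_nonneg)
  have c_pos: "0 < c"
    unfolding c_def using stationary_pos[OF start] rate_out_killing_pos[OF start] by simp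
  have "escape_star * loops \<le> (1 - sum (walk_weight killed_jump) (excursions M)) * loops"
    using escape_star_le loops_nonneg by (rule mult_right_mono)
  also have "\<dots> \<le> 1"
    using sum_loop_walks_le[of M] by (simp add: loops_def algebra_simps)
  finally have escape_loops: "escape_star * loops \<le> 1" .
  have "c * escape_star * sum (walk_weight killed_jump) (hit_walks M)
      \<le> c * escape_star * (loops * exits)"
    using sum_hit_walks_le[OF assms] c_pos escape_star_pos
    by (intro mult_left_mono) (simp_all add: loops_def exits_def)
  also have "\<dots> = (escape_star * loops) * (c * exits)" by (simp add: algebra_simps)
  also have "\<dots> \<le> c * exits"
    using escape_loops c_pos exits_nonneg escape_star_pos loops_nonneg
    by (intro mult_left_le_one_le mult_nonneg_nonneg) auto
  also have "\<dots> \<le> entrance_flow A"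
    using sum_exit_walks_le[OF assms] by (simp add: c_def exits_def)
  finally show ?thesis by (simp add: c_def)
qed

lemma hit_path_term_nonneg:
  "set xs \<subseteq> \<Omega> \<Longrightarrow> 0 \<le> path_weight R \<Omega> xs * holding_sum_lt R \<Omega> xs S"
  unfolding path_weight_eq_walk_weight holding_sum_lt_def
  by (intro mult_nonneg_nonneg walk_weight_nonneg[OF jump_prob_nonneg[OF rates_nonneg]]
      measure_nonneg)

text \<open>The Chernoff bound with parameter \<open>\<gamma>\<close> converts the jump probabilities along the path into
  those of the killed chain.\<close>
lemma hit_path_term_le:
  assumes xs: "length xs = Suc n" "set xs \<subseteq> \<Omega>"
  shows "path_weight R \<Omega> xs * holding_sum_lt R \<Omega> xs S \<le> exp (\<gamma> * S) * walk_weight killed_jump xs"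
proof (cases "\<exists>i<n. lam (xs ! i) = 0")
  case True
  then obtain i where "i < n" "lam (xs ! i) = 0" by auto
  then have "path_weight R \<Omega> xs = 0"
    unfolding path_weight_def xs(1) by (intro prod_zero) (auto simp: jump_prob_def)
  then show ?thesis
    using xs(2) killed_walk_weight_nonneg by simp
next
  case False
  have xs_nth: "xs ! i \<in> \<Omega>" if "i < Suc n" for i
    using xs that by (metis nth_mem subsetD)
  have rate_pos: "0 < lam (xs ! i)" if "i < n" for i
    using rate_out_nonneg[OF xs_nth, of i] False that by (simp add: order_le_less)
  have "holding_sum_lt R \<Omega> xs S \<le> exp (\<gamma> * S) * (\<Prod>i<n. lam (xs ! i) / (lam (xs ! i) + \<gamma>))"
    unfolding holding_sum_lt_def holding_law_def xs(1) diff_Suc_1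
    by (rule measure_sum_exponentials_less[OF rate_pos killing_pos])
  moreover have "0 \<le> path_weight R \<Omega> xs"
    unfolding path_weight_eq_walk_weight
    by (rule walk_weight_nonneg[OF jump_prob_nonneg[OF rates_nonneg] xs(2)])
  ultimately have "path_weight R \<Omega> xs * holding_sum_lt R \<Omega> xs S
      \<le> path_weight R \<Omega> xs * (exp (\<gamma> * S) * (\<Prod>i<n. lam (xs ! i) / (lam (xs ! i) + \<gamma>)))"
    by (rule mult_left_mono)
  also have "\<dots> = exp (\<gamma> * S)
      * (\<Prod>i<n. jump_prob R \<Omega> (xs ! i) (xs ! Suc i) * (lam (xs ! i) / (lam (xs ! i) + \<gamma>)))"
    unfolding path_weight_def xs(1) diff_Suc_1 prod.distrib by (simp only: mult_ac)
  also have "\<dots> = exp (\<gamma> * S) * walk_weight killed_jump xs"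
  proof -
    have "jump_prob R \<Omega> (xs ! i) (xs ! Suc i) * (lam (xs ! i) / (lam (xs ! i) + \<gamma>))
        = killed_jump (xs ! i) (xs ! Suc i)" if "i < n" for i
      using rate_pos[OF that] by (simp add: jump_prob_def killed_jump_def)
    then show ?thesis
      unfolding walk_weight_eq_prod xs(1) diff_Suc_1
      by (intro arg_cong[where f = "\<lambda>p. exp (\<gamma> * S) * p"] prod.cong) auto
  qed
  finally show ?thesis .
qed

lemma sum_hit_path_terms_le:
  assumes "\<eta> \<notin> A"
  shows "(\<Sum>n<K. \<Sum>xs\<in>hit_paths \<Omega> A \<eta> n. path_weight R \<Omega> xs * holding_sum_lt R \<Omega> xs S)
    \<le> exp (\<gamma> * S) * entrance_flow A / (2 * cap_star R \<Omega> \<nu> \<gamma> \<eta>)"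
proof -
  have finite_hit_paths: "finite (hit_paths \<Omega> A \<eta> n)" for n
    by (rule finite_subset[OF _ finite_lists_length_le[OF finite_states, of "Suc n"]])
      (auto simp: hit_paths_def)
  have "(\<Sum>n<K. \<Sum>xs\<in>hit_paths \<Omega> A \<eta> n. path_weight R \<Omega> xs * holding_sum_lt R \<Omega> xs S)
      \<le> exp (\<gamma> * S) * (\<Sum>n<K. sum (walk_weight killed_jump) (hit_paths \<Omega> A \<eta> n))"
    by (auto simp: sum_distrib_left hit_paths_def intro!: sum_mono hit_path_term_le)
  also have "(\<Sum>n<K. sum (walk_weight killed_jump) (hit_paths \<Omega> A \<eta> n))
      = sum (walk_weight killed_jump) (\<Union>n<K. hit_paths \<Omega> A \<eta> n)"
  proof (rule sum.UNION_disjoint[symmetric])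
    show "\<forall>i\<in>{..<K}. \<forall>j\<in>{..<K}. i \<noteq> j \<longrightarrow> hit_paths \<Omega> A \<eta> i \<inter> hit_paths \<Omega> A \<eta> j = {}"
      by (auto simp: hit_paths_def)
  qed (simp_all add: finite_hit_paths)
  also have "\<dots> \<le> sum (walk_weight killed_jump) (hit_walks K)"
    by (rule sum_mono2[OF finite_walk_sets(1)])
      (auto simp: hit_paths_def hit_walks_def intro: killed_walk_weight_nonneg)
  also have "\<dots> \<le> entrance_flow A / (2 * cap_star R \<Omega> \<nu> \<gamma> \<eta>)"
    using sum_hit_walks_mult_le[OF assms, of K] stationary_pos[OF start]
      rate_out_killing_pos[OF start] escape_star_pos
    by (simp add: cap_star_eq pos_le_divide_eq mult_ac)
  finally show ?thesis by (simp add: mult_left_mono)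
qed

lemma cap_star_pos: "0 < cap_star R \<Omega> \<nu> \<gamma> \<eta>"
  unfolding cap_star_eq
  using stationary_pos[OF start] rate_out_killing_pos[OF start] escape_star_pos by simp

lemma prob_hit_before_le:
  assumes "\<eta> \<notin> A"
  shows "0 \<le> prob_hit_before R \<Omega> A \<eta> S"
    and "prob_hit_before R \<Omega> A \<eta> S \<le> exp (\<gamma> * S) * entrance_flow A / (2 * cap_star R \<Omega> \<nu> \<gamma> \<eta>)"
proof -
  define hit_term where
    "hit_term n = (\<Sum>xs\<in>hit_paths \<Omega> A \<eta> n. path_weight R \<Omega> xs * holding_sum_lt R \<Omega> xs S)" for n
  have hit_term_nonneg: "0 \<le> hit_term n" for n
    unfolding hit_term_def by (auto simp: hit_paths_def intro!: sum_nonneg hit_path_term_nonneg)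
  have summable: "summable hit_term"
    by (rule summableI_nonneg_bounded[OF hit_term_nonneg])
      (use sum_hit_path_terms_le[OF assms] in \<open>simp add: hit_term_def\<close>)
  have eq: "prob_hit_before R \<Omega> A \<eta> S = suminf hit_term"
    by (simp add: prob_hit_before_def hit_term_def[abs_def])
  show "0 \<le> prob_hit_before R \<Omega> A \<eta> S"
    unfolding eq by (rule suminf_nonneg[OF summable hit_term_nonneg])
  show "prob_hit_before R \<Omega> A \<eta> S \<le> exp (\<gamma> * S) * entrance_flow A / (2 * cap_star R \<Omega> \<nu> \<gamma> \<eta>)"
    unfolding eq by (rule suminf_le_const[OF summable])
      (use sum_hit_path_terms_le[OF assms] in \<open>simp add: hit_term_def\<close>)
qed


lemma prob_hit_before_nonneg: "0 \<le> prob_hit_before R \<Omega> A \<eta> S"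
  using prob_hit_before_in_target(1)[OF target_subset] prob_hit_before_le(1) by blast

lemma prob_hit_before_le_of_bool:
  "prob_hit_before R \<Omega> A \<eta> S \<le> of_bool (\<eta> \<in> A) + exp (\<gamma> * S) * entrance_flow A / cap_star R \<Omega> \<nu> \<gamma> \<eta>"
proof (cases "\<eta> \<in> A")
  case True
  have "0 \<le> exp (\<gamma> * S) * entrance_flow A / cap_star R \<Omega> \<nu> \<gamma> \<eta>"
    using entrance_flow_nonneg[OF target_subset] cap_star_pos by simp
  with True show ?thesis
    using prob_hit_before_in_target(2)[OF target_subset True, of R S] by simp
next
  case False
  have "exp (\<gamma> * S) * entrance_flow A / (2 * cap_star R \<Omega> \<nu> \<gamma> \<eta>)
      \<le> exp (\<gamma> * S) * entrance_flow A / cap_star R \<Omega> \<nu> \<gamma> \<eta>"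
    using entrance_flow_nonneg[OF target_subset] cap_star_pos by (intro frac_le) auto
  with False show ?thesis
    using prob_hit_before_le(2)[OF False, of S] by simp
qed

end

lemma irreducible_stationary_pos:
  assumes fin: "finite \<Omega>" and Rnn: "\<And>x y. x \<in> \<Omega> \<Longrightarrow> y \<in> \<Omega> \<Longrightarrow> 0 \<le> R x y"
    and irr: "irreducible_rates R \<Omega>" and st: "stationary R \<Omega> \<nu>" and x: "x \<in> \<Omega>"
  shows "0 < \<nu> x"
proof (rule ccontr)
  assume "\<not> 0 < \<nu> x"
  moreover have nonneg: "\<And>z. z \<in> \<Omega> \<Longrightarrow> 0 \<le> \<nu> z" using st by (simp add: stationary_def)
  ultimately have x_zero: "\<nu> x = 0" using x by force
  define rel where "rel = {(a, b). a \<in> \<Omega> \<and> b \<in> \<Omega> \<and> R a b > 0}"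
  have upstream_zero: "\<nu> a = 0" if "(a, x) \<in> rtrancl rel" for a
    using that
  proof (induction rule: converse_rtrancl_induct)
    case base
    then show ?case using x_zero .
  next
    case (step a b)
    then have ab: "a \<in> \<Omega>" "b \<in> \<Omega>" "R a b > 0" by (auto simp: rel_def)
    have "(\<Sum>z\<in>\<Omega>. \<nu> z * R z b) = \<nu> b * rate_out R \<Omega> b" using st ab by (simp add: stationary_def)
    then have "(\<Sum>z\<in>\<Omega>. \<nu> z * R z b) = 0" using step by simp
    moreover have "\<forall>z\<in>\<Omega>. 0 \<le> \<nu> z * R z b" using nonneg Rnn ab by auto
    ultimately have "\<forall>z\<in>\<Omega>. \<nu> z * R z b = 0" using fin by (simp only: sum_nonneg_eq_0_iff)
    then have "\<nu> a * R a b = 0" using ab by blast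
    then show ?case using ab by simp
  qed
  have "\<forall>a\<in>\<Omega>. \<nu> a = 0"
  proof
    fix a assume "a \<in> \<Omega>"
    then have "(a, x) \<in> rtrancl rel" using irr x by (simp add: irreducible_rates_def rel_def)
    then show "\<nu> a = 0" by (rule upstream_zero)
  qed
  then have "(\<Sum>z\<in>\<Omega>. \<nu> z) = 0" by simp
  then show False using st by (simp add: stationary_def)
qed

lemma mixture_prob_hit_before_le:
  assumes finite: "finite \<Omega>" and rates_nonneg: "\<And>x y. x \<in> \<Omega> \<Longrightarrow> y \<in> \<Omega> \<Longrightarrow> 0 \<le> R x y"
    and irreducible: "irreducible_rates R \<Omega>" and stationary: "stationary R \<Omega> \<nu>"
    and target: "A \<subseteq> \<Omega>" and killing: "0 < \<gamma>" and horizon: "0 < S" and initial: "prob_on \<Omega> \<mu>"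
  shows "0 \<le> (\<Sum>\<eta>\<in>\<Omega>. \<mu> \<eta> * prob_hit_before R \<Omega> A \<eta> S)"
    and "(\<Sum>\<eta>\<in>\<Omega>. \<mu> \<eta> * prob_hit_before R \<Omega> A \<eta> S)
      \<le> exp (\<gamma> * S) * ((\<Sum>x\<in>A. \<mu> x)
          + (\<Sum>\<eta>\<in>\<Omega>. \<nu> \<eta> * (if \<eta> \<notin> A then (\<Sum>\<zeta>\<in>A. R \<eta> \<zeta>) else 0))
            * (\<Sum>\<eta>\<in>\<Omega>. \<mu> \<eta> * (1 / cap_star R \<Omega> \<nu> \<gamma> \<eta>)))"
proof -
  interpret killed_chain \<Omega> R \<nu> \<gamma>
    using finite rates_nonneg stationary killing
      irreducible_stationary_pos[OF finite rates_nonneg irreducible stationary]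
    by unfold_locales auto
  have hitting: "killed_chain_hitting \<Omega> R \<nu> \<gamma> A \<eta>" if "\<eta> \<in> \<Omega>" for \<eta>
    using target that by unfold_locales
  define E where "E = entrance_flow A"
  define c where "c \<eta> = 1 / cap_star R \<Omega> \<nu> \<gamma> \<eta>" for \<eta>
  define ex where "ex = exp (\<gamma> * S)"
  have ex: "1 \<le> ex" unfolding ex_def using killing horizon by simp
  have \<mu>: "0 \<le> \<mu> \<eta>" if "\<eta> \<in> \<Omega>" for \<eta> using initial that by (simp add: prob_on_def)
  have pointwise: "0 \<le> prob_hit_before R \<Omega> A \<eta> S \<and>
      prob_hit_before R \<Omega> A \<eta> S \<le> of_bool (\<eta> \<in> A) + ex * E * c \<eta>" if "\<eta> \<in> \<Omega>" for \<eta>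
    using killed_chain_hitting.prob_hit_before_nonneg[OF hitting[OF that]]
      killed_chain_hitting.prob_hit_before_le_of_bool[OF hitting[OF that]]
    by (simp add: E_def c_def ex_def)
  show "0 \<le> (\<Sum>\<eta>\<in>\<Omega>. \<mu> \<eta> * prob_hit_before R \<Omega> A \<eta> S)"
    using pointwise \<mu> by (intro sum_nonneg mult_nonneg_nonneg) auto
  have "(\<Sum>\<eta>\<in>\<Omega>. \<mu> \<eta> * prob_hit_before R \<Omega> A \<eta> S) \<le> (\<Sum>\<eta>\<in>\<Omega>. \<mu> \<eta> * (of_bool (\<eta> \<in> A) + ex * E * c \<eta>))"
    using pointwise \<mu> by (intro sum_mono mult_left_mono) auto
  also have "\<dots> = (\<Sum>\<eta>\<in>\<Omega>. \<mu> \<eta> * of_bool (\<eta> \<in> A)) + ex * E * (\<Sum>\<eta>\<in>\<Omega>. \<mu> \<eta> * c \<eta>)"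
    by (simp add: algebra_simps sum.distrib sum_distrib_left)
  also have "(\<Sum>\<eta>\<in>\<Omega>. \<mu> \<eta> * of_bool (\<eta> \<in> A)) = (\<Sum>x\<in>A. \<mu> x)"
    using finite target by (simp add: sum.inter_restrict Int_absorb1 flip: sum.If_cases)
  also have "(\<Sum>x\<in>A. \<mu> x) + ex * E * (\<Sum>\<eta>\<in>\<Omega>. \<mu> \<eta> * c \<eta>)
      \<le> ex * ((\<Sum>x\<in>A. \<mu> x) + E * (\<Sum>\<eta>\<in>\<Omega>. \<mu> \<eta> * c \<eta>))"
  proof -
    have "0 \<le> (\<Sum>x\<in>A. \<mu> x)" using target \<mu> by (auto intro!: sum_nonneg)
    then have "(\<Sum>x\<in>A. \<mu> x) \<le> ex * (\<Sum>x\<in>A. \<mu> x)"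
      using mult_right_mono[OF ex] by simp
    then show ?thesis by (simp add: algebra_simps)
  qed
  finally show "(\<Sum>\<eta>\<in>\<Omega>. \<mu> \<eta> * prob_hit_before R \<Omega> A \<eta> S) \<le> exp (\<gamma> * S) * ((\<Sum>x\<in>A. \<mu> x)
      + (\<Sum>\<eta>\<in>\<Omega>. \<nu> \<eta> * (if \<eta> \<notin> A then (\<Sum>\<zeta>\<in>A. R \<eta> \<zeta>) else 0))
        * (\<Sum>\<eta>\<in>\<Omega>. \<mu> \<eta> * (1 / cap_star R \<Omega> \<nu> \<gamma> \<eta>)))"
    by (simp add: ex_def E_def c_def entrance_flow_def)
qed

theorem lemma3p8:
  fixes \<Omega> :: "nat \<Rightarrow> 'a set" and R :: "nat \<Rightarrow> 'a \<Rightarrow> 'a \<Rightarrow> real"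
    and \<nu> \<mu> :: "nat \<Rightarrow> 'a \<Rightarrow> real" and A :: "nat \<Rightarrow> 'a set"
    and S \<gamma> :: "nat \<Rightarrow> real"
  assumes fin: "\<And>N. N \<ge> 1 \<Longrightarrow> finite (\<Omega> N) \<and> \<Omega> N \<noteq> {}"
    and rates_nonneg: "\<And>N x y. N \<ge> 1 \<Longrightarrow> x \<in> \<Omega> N \<Longrightarrow> y \<in> \<Omega> N \<Longrightarrow> R N x y \<ge> 0"
    and no_self: "\<And>N x. N \<ge> 1 \<Longrightarrow> x \<in> \<Omega> N \<Longrightarrow> R N x x = 0"
    and irred: "\<And>N. N \<ge> 1 \<Longrightarrow> irreducible_rates (R N) (\<Omega> N)"
    and stat: "\<And>N. N \<ge> 1 \<Longrightarrow> stationary (R N) (\<Omega> N) (\<nu> N)"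
    and A_sub: "\<And>N. N \<ge> 1 \<Longrightarrow> A N \<subseteq> \<Omega> N"
    and nu_A: "(\<lambda>N. \<Sum>x\<in>A N. \<nu> N x) \<longlonglongrightarrow> 0"
    and S_pos: "\<And>N. N \<ge> 1 \<Longrightarrow> S N > 0"
    and mu: "\<And>N. N \<ge> 1 \<Longrightarrow> prob_on (\<Omega> N) (\<mu> N)"
    and gamma_pos: "\<And>N. N \<ge> 1 \<Longrightarrow> \<gamma> N > 0"
    and gamma_S: "(\<lambda>N. S N / inverse (\<gamma> N)) \<longlonglongrightarrow> 0"
    and main: "(\<lambda>N. (\<Sum>x\<in>A N. \<mu> N x)
                 + (\<Sum>\<eta>\<in>\<Omega> N. \<nu> N \<eta> * (if \<eta> \<notin> A N then (\<Sum>\<zeta>\<in>A N. R N \<eta> \<zeta>) else 0))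
                   * (\<Sum>\<eta>\<in>\<Omega> N. \<mu> N \<eta> * (1 / cap_star (R N) (\<Omega> N) (\<nu> N) (\<gamma> N) \<eta>)))
               \<longlonglongrightarrow> 0"
  shows "(\<lambda>N. \<Sum>\<eta>\<in>\<Omega> N. \<mu> N \<eta> * prob_hit_before (R N) (\<Omega> N) (A N) \<eta> (S N)) \<longlonglongrightarrow> 0"
proof -
  define F where "F N = (\<Sum>\<eta>\<in>\<Omega> N. \<mu> N \<eta> * prob_hit_before (R N) (\<Omega> N) (A N) \<eta> (S N))" for N
  define G where "G N = (\<Sum>x\<in>A N. \<mu> N x)
    + (\<Sum>\<eta>\<in>\<Omega> N. \<nu> N \<eta> * (if \<eta> \<notin> A N then (\<Sum>\<zeta>\<in>A N. R N \<eta> \<zeta>) else 0))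
      * (\<Sum>\<eta>\<in>\<Omega> N. \<mu> N \<eta> * (1 / cap_star (R N) (\<Omega> N) (\<nu> N) (\<gamma> N) \<eta>))" for N
  have bounds: "0 \<le> F N" "F N \<le> exp (\<gamma> N * S N) * G N" if "N \<ge> 1" for N
    using mixture_prob_hit_before_le[OF fin[OF that, THEN conjunct1] rates_nonneg[OF that]
        irred[OF that] stat[OF that] A_sub[OF that] gamma_pos[OF that] S_pos[OF that] mu[OF that]]
    unfolding F_def G_def by blast+
  have "(\<lambda>N. \<gamma> N * S N) \<longlonglongrightarrow> 0"
    using gamma_S by (simp add: divide_inverse mult.commute)
  then have "(\<lambda>N. exp (\<gamma> N * S N) * G N) \<longlonglongrightarrow> exp 0 * 0"
    using main unfolding G_def by (intro tendsto_mult tendsto_exp)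
  then have upper: "(\<lambda>N. exp (\<gamma> N * S N) * G N) \<longlonglongrightarrow> 0" by simp
  have "\<forall>\<^sub>F N in sequentially. 0 \<le> F N" "\<forall>\<^sub>F N in sequentially. F N \<le> exp (\<gamma> N * S N) * G N"
    unfolding eventually_sequentially by (intro exI[of _ 1] allI impI bounds; assumption)+
  from this tendsto_const upper have "F \<longlonglongrightarrow> 0"
    by (rule tendsto_sandwich)
  then show ?thesis unfolding F_def[abs_def] .
qed

end
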